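(* Let $R$ be a ring and let $V$ be an $(R,R)$-bimodule which is also an idempotent-free ring (not necessarily with identity), and let $S=I(R;V)$ be the ideal extension of $R$ by $V$. The following are equivalent: (1) $S$ is uniquely weakly $I'$-clean for some ideal $I'$ of $S$; (2) (a) $R$ is uniquely weakly $I$-clean for some ideal $I$ of $R$, and (b) for every $e\in Idem(R)$ and every $v\in V$, $ev=ve$.
   Context: All rings other than $V$ are associative with identity; $Idem(R)$ is the set of idempotents. $V$ is an $(R,R)$-bimodule carrying an associative multiplication compatible with the bimodule structure (i.e. $(rv)w=r(vw)$, $(vr)w=v(rw)$, $(vw)r=v(wr)$ for $r\in R$, $v,w\in V$); $V$ is idempotent free if $v^2=v$ implies $v=0$. The ideal extension $I(R;V)$ is the additive group $R\oplus V$ with multiplication $(r,v)(s,w)=(rs,\,rw+vs+vw)$; it is a ring with identity $(1,0)$. For an ideal $I$ of a ring $A$, $A$ is uniquely weakly $I$-clean if for every $x\in A$ there exists a unique idempotent $e\in A$ with $x-e\in I$ or $x+e\in I$. *)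

theory Defs
  imports Main
begin

text \<open>V is an abelian group with a left R-action lm, a right R-action rm and an
  associative (not necessarily unital) multiplication mv.\<close>

definition bimodule_ring ::
  "('r::ring_1 \<Rightarrow> 'v::ab_group_add \<Rightarrow> 'v) \<Rightarrow> ('v \<Rightarrow> 'r \<Rightarrow> 'v) \<Rightarrow> ('v \<Rightarrow> 'v \<Rightarrow> 'v) \<Rightarrow> bool" where
  "bimodule_ring lm rm mv \<longleftrightarrow>
     \<comment> \<open>left module\<close>
     (\<forall>r v w. lm r (v + w) = lm r v + lm r w) \<and>
     (\<forall>r s v. lm (r + s) v = lm r v + lm s v) \<and>
     (\<forall>r s v. lm (r * s) v = lm r (lm s v)) \<and>
     (\<forall>v. lm 1 v = v) \<and>
     \<comment> \<open>right module\<close>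
     (\<forall>r v w. rm (v + w) r = rm v r + rm w r) \<and>
     (\<forall>r s v. rm v (r + s) = rm v r + rm v s) \<and>
     (\<forall>r s v. rm v (r * s) = rm (rm v r) s) \<and>
     (\<forall>v. rm v 1 = v) \<and>
     \<comment> \<open>bimodule\<close>
     (\<forall>r s v. rm (lm r v) s = lm r (rm v s)) \<and>
     \<comment> \<open>ring structure on V (without identity)\<close>
     (\<forall>u v w. mv (mv u v) w = mv u (mv v w)) \<and>
     (\<forall>u v w. mv u (v + w) = mv u v + mv u w) \<and>
     (\<forall>u v w. mv (u + v) w = mv u w + mv v w) \<and>
     \<comment> \<open>compatibility\<close>
     (\<forall>r v w. mv (lm r v) w = lm r (mv v w)) \<and>
     (\<forall>r v w. mv (rm v r) w = mv v (lm r w)) \<and>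
     (\<forall>r v w. rm (mv v w) r = mv v (rm w r))"

definition idempotent_free :: "('v::ab_group_add \<Rightarrow> 'v \<Rightarrow> 'v) \<Rightarrow> bool" where
  "idempotent_free mv \<longleftrightarrow> (\<forall>v. mv v v = v \<longrightarrow> v = 0)"

definition is_ideal :: "'r::ring_1 set \<Rightarrow> bool" where
  "is_ideal I \<longleftrightarrow> 0 \<in> I \<and> (\<forall>a\<in>I. \<forall>b\<in>I. a - b \<in> I) \<and>
     (\<forall>a\<in>I. \<forall>r. r * a \<in> I \<and> a * r \<in> I)"

definition Idem :: "'r::ring_1 set" where
  "Idem = {e. e * e = e}"

definition uniquely_weakly_clean :: "'r::ring_1 set \<Rightarrow> bool" where
  "uniquely_weakly_clean I \<longleftrightarrow> (\<forall>x. \<exists>!e. e \<in> Idem \<and> (x - e \<in> I \<or> x + e \<in> I))"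

definition ext_add :: "'r::ring_1 \<times> 'v::ab_group_add \<Rightarrow> 'r \<times> 'v \<Rightarrow> 'r \<times> 'v" where
  "ext_add x y = (fst x + fst y, snd x + snd y)"

definition ext_sub :: "'r::ring_1 \<times> 'v::ab_group_add \<Rightarrow> 'r \<times> 'v \<Rightarrow> 'r \<times> 'v" where
  "ext_sub x y = (fst x - fst y, snd x - snd y)"

definition ext_mult ::
  "('r::ring_1 \<Rightarrow> 'v::ab_group_add \<Rightarrow> 'v) \<Rightarrow> ('v \<Rightarrow> 'r \<Rightarrow> 'v) \<Rightarrow> ('v \<Rightarrow> 'v \<Rightarrow> 'v)
     \<Rightarrow> 'r \<times> 'v \<Rightarrow> 'r \<times> 'v \<Rightarrow> 'r \<times> 'v" where
  "ext_mult lm rm mv x y =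
     (fst x * fst y, lm (fst x) (snd y) + rm (snd x) (fst y) + mv (snd x) (snd y))"

definition ext_is_ideal ::
  "('r::ring_1 \<Rightarrow> 'v::ab_group_add \<Rightarrow> 'v) \<Rightarrow> ('v \<Rightarrow> 'r \<Rightarrow> 'v) \<Rightarrow> ('v \<Rightarrow> 'v \<Rightarrow> 'v)
     \<Rightarrow> ('r \<times> 'v) set \<Rightarrow> bool" where
  "ext_is_ideal lm rm mv J \<longleftrightarrow> (0, 0) \<in> J \<and> (\<forall>a\<in>J. \<forall>b\<in>J. ext_sub a b \<in> J) \<and>
     (\<forall>a\<in>J. \<forall>s. ext_mult lm rm mv s a \<in> J \<and> ext_mult lm rm mv a s \<in> J)"

definition ext_Idem ::
  "('r::ring_1 \<Rightarrow> 'v::ab_group_add \<Rightarrow> 'v) \<Rightarrow> ('v \<Rightarrow> 'r \<Rightarrow> 'v) \<Rightarrow> ('v \<Rightarrow> 'v \<Rightarrow> 'v)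
     \<Rightarrow> ('r \<times> 'v) set" where
  "ext_Idem lm rm mv = {e. ext_mult lm rm mv e e = e}"

definition ext_uniquely_weakly_clean ::
  "('r::ring_1 \<Rightarrow> 'v::ab_group_add \<Rightarrow> 'v) \<Rightarrow> ('v \<Rightarrow> 'r \<Rightarrow> 'v) \<Rightarrow> ('v \<Rightarrow> 'v \<Rightarrow> 'v)
     \<Rightarrow> ('r \<times> 'v) set \<Rightarrow> bool" where
  "ext_uniquely_weakly_clean lm rm mv J \<longleftrightarrow>
     (\<forall>x. \<exists>!e. e \<in> ext_Idem lm rm mv \<and> (ext_sub x e \<in> J \<or> ext_add x e \<in> J))"

end

theory Submission
  imports Defs "HOL.Modules"
begin

text \<open>Let e be idempotent in R. The elements (e, e v (1 - e)) and (e, (1 - e) v e) of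
  S = I(R;V) are idempotents whose V-parts square to zero. If S is uniquely weakly J-clean,
  every square-zero element (0, w) lies in J, since an idempotent differing from it by an element
  of J lies in J itself and so competes with 0. Uniqueness then identifies both idempotents
  with (e, 0), which says e v = e v e = v e. Conversely, once idempotents of R act centrally on
  the idempotent-free V, the only idempotents of S are the pairs (e, 0), and weak cleanness passes
  from I to I \<times> V and from J back to {r. (r, 0) \<in> J}.\<close>

lemma uniquely_weakly_clean_unique:
  assumes "uniquely_weakly_clean I"
    and "e \<in> Idem" "x - e \<in> I \<or> x + e \<in> I"
    and "e' \<in> Idem" "x - e' \<in> I \<or> x + e' \<in> I"
  shows "e = e'"
  using assms unfolding uniquely_weakly_clean_def by blast

lemma ext_uniquely_weakly_clean_unique:
  assumes "ext_uniquely_weakly_clean lm rm mv J"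
    and "h \<in> ext_Idem lm rm mv" "ext_sub x h \<in> J \<or> ext_add x h \<in> J"
    and "h' \<in> ext_Idem lm rm mv" "ext_sub x h' \<in> J \<or> ext_add x h' \<in> J"
  shows "h = h'"
  using assms unfolding ext_uniquely_weakly_clean_def by blast

locale ideal_extension =
  fixes lm :: "'r::ring_1 \<Rightarrow> 'v::ab_group_add \<Rightarrow> 'v"
    and rm :: "'v \<Rightarrow> 'r \<Rightarrow> 'v"
    and mv :: "'v \<Rightarrow> 'v \<Rightarrow> 'v"
  assumes bimodule_ring: "bimodule_ring lm rm mv"
begin

lemma
  shows lm_add: "lm r (v + w) = lm r v + lm r w"
    and lm_add_left: "lm (r + s) v = lm r v + lm s v"
    and lm_mult: "lm (r * s) v = lm r (lm s v)"
    and lm_one [simp]: "lm 1 v = v"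
    and rm_add: "rm (v + w) r = rm v r + rm w r"
    and rm_add_right: "rm v (r + s) = rm v r + rm v s"
    and rm_mult: "rm v (r * s) = rm (rm v r) s"
    and rm_one [simp]: "rm v 1 = v"
    and rm_lm: "rm (lm r v) s = lm r (rm v s)"
    and mv_add_right: "mv u (v + w) = mv u v + mv u w"
    and mv_add_left: "mv (u + v) w = mv u w + mv v w"
    and mv_lm: "mv (lm r v) w = lm r (mv v w)"
    and mv_rm: "mv (rm v r) w = mv v (lm r w)"
    and rm_mv: "rm (mv v w) r = mv v (rm w r)"
  using bimodule_ring unfolding bimodule_ring_def by simp_all

lemma additive_lm: "additive (lm r)"
  by unfold_locales (rule lm_add)
lemma additive_lm_left: "additive (\<lambda>r. lm r v)"
  by unfold_locales (rule lm_add_left)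
lemma additive_rm: "additive (\<lambda>v. rm v r)"
  by unfold_locales (rule rm_add)
lemma additive_rm_right: "additive (rm v)"
  by unfold_locales (rule rm_add_right)
lemma additive_mv: "additive (mv u)"
  by unfold_locales (rule mv_add_right)
lemma additive_mv_left: "additive (\<lambda>u. mv u w)"
  by unfold_locales (rule mv_add_left)

lemmas lm_zero [simp] = additive.zero[OF additive_lm]
  and lm_zero_left [simp] = additive.zero[OF additive_lm_left]
  and rm_zero [simp] = additive.zero[OF additive_rm]
  and rm_zero_right [simp] = additive.zero[OF additive_rm_right]
  and mv_zero [simp] = additive.zero[OF additive_mv]
  and lm_minus = additive.minus[OF additive_lm]
  and mv_minus = additive.minus[OF additive_mv]
  and mv_minus_left = additive.minus[OF additive_mv_left]
  and lm_diff = additive.diff[OF additive_lm]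
  and lm_diff_left = additive.diff[OF additive_lm_left]
  and rm_diff = additive.diff[OF additive_rm]
  and rm_diff_right = additive.diff[OF additive_rm_right]
  and mv_diff = additive.diff[OF additive_mv]
  and mv_diff_left = additive.diff[OF additive_mv_left]

abbreviation ext_times where "ext_times \<equiv> ext_mult lm rm mv"

lemma ext_mult_diff_left: "ext_times (ext_sub a b) c = ext_sub (ext_times a c) (ext_times b c)"
  by (simp add: ext_mult_def ext_sub_def lm_diff_left rm_diff mv_diff_left algebra_simps)

lemma ext_mult_diff_right: "ext_times c (ext_sub a b) = ext_sub (ext_times c a) (ext_times c b)"
  by (simp add: ext_mult_def ext_sub_def lm_diff rm_diff_right mv_diff algebra_simps)

lemma ext_Idem_iff: "(e, u) \<in> ext_Idem lm rm mv \<longleftrightarrow> e * e = e \<and> lm e u + rm u e + mv u u = u"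
  by (auto simp: ext_Idem_def ext_mult_def)

lemma idempotent_in_ideal_of_square_zero:
  assumes J: "ext_is_ideal lm rm mv J"
    and xx: "ext_times x x = (0, 0)" and hh: "ext_times h h = h" and xh: "ext_sub x h \<in> J"
  shows "h \<in> J"
proof -
  \<comment> \<open>with j = x - h: h = h h = (x - j) h and x h = x (x - j) = - x j\<close>
  define j where "j = ext_sub x h"
  have h: "h = ext_sub x j"
    by (simp add: j_def ext_sub_def)
  have "ext_times x h = ext_sub (0, 0) (ext_times x j)"
    using ext_mult_diff_right xx h by metis
  then have "ext_times x h \<in> J"
    using J xh unfolding ext_is_ideal_def j_def by metis
  moreover have "ext_times j h \<in> J"
    using J xh unfolding ext_is_ideal_def j_def by blast
  moreover have "h = ext_sub (ext_times x h) (ext_times j h)"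
    using hh h ext_mult_diff_left by metis
  ultimately show ?thesis
    using J unfolding ext_is_ideal_def by metis
qed

lemma square_zero_in_ideal:
  assumes J: "ext_is_ideal lm rm mv J" and U: "ext_uniquely_weakly_clean lm rm mv J"
    and ww: "mv w w = 0"
  shows "(0, w) \<in> J"
proof -
  have J0: "(0, 0) \<in> J" and J_sub: "\<And>a b. a \<in> J \<Longrightarrow> b \<in> J \<Longrightarrow> ext_sub a b \<in> J"
    using J unfolding ext_is_ideal_def by blast+
  obtain h where h: "h \<in> ext_Idem lm rm mv" "ext_sub (0, w) h \<in> J \<or> ext_add (0, w) h \<in> J"
    using U unfolding ext_uniquely_weakly_clean_def by blast
  have hh: "ext_times h h = h"
    using h(1) by (simp add: ext_Idem_def)
  have "h \<in> J"
    using h(2)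
  proof
    assume "ext_sub (0, w) h \<in> J"
    then show "h \<in> J"
      using idempotent_in_ideal_of_square_zero[OF J _ hh, of "(0, w)"] ww by (simp add: ext_mult_def)
  next
    assume "ext_add (0, w) h \<in> J"
    then have "ext_sub (0, 0) (ext_add (0, w) h) \<in> J"
      using J_sub[OF J0] by blast
    then have "ext_sub (0, - w) h \<in> J"
      by (simp add: ext_sub_def ext_add_def)
    then show "h \<in> J"
      using idempotent_in_ideal_of_square_zero[OF J _ hh, of "(0, - w)"] ww
      by (simp add: ext_mult_def mv_minus mv_minus_left)
  qed
  then have "ext_sub (0, 0) h \<in> J"
    using J_sub[OF J0] by blast
  moreover have "ext_sub (0, 0) (0, 0) \<in> J"
    using J0 by (simp add: ext_sub_def)
  moreover have "(0, 0) \<in> ext_Idem lm rm mv"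
    by (simp add: ext_Idem_iff)
  ultimately have "h = (0, 0)"
    using ext_uniquely_weakly_clean_unique[OF U h(1)] by blast
  then show ?thesis
    using h(2) by (simp add: ext_sub_def ext_add_def)
qed

lemma ext_Idem_snd_zero_of_square_zero:
  assumes J: "ext_is_ideal lm rm mv J" and U: "ext_uniquely_weakly_clean lm rm mv J"
    and eu: "(e, u) \<in> ext_Idem lm rm mv" and uu: "mv u u = 0"
  shows "u = 0"
proof -
  have "ext_sub (e, 0) (e, u) \<in> J"
    using square_zero_in_ideal[OF J U, of "- u"] uu
    by (simp add: ext_sub_def mv_minus mv_minus_left)
  moreover have "(e, 0) \<in> ext_Idem lm rm mv" and "ext_sub (e, 0) (e, 0) \<in> J"
    using eu J by (auto simp: ext_Idem_iff ext_sub_def ext_is_ideal_def)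
  ultimately show "u = 0"
    using ext_uniquely_weakly_clean_unique[OF U eu] by blast
qed

lemma idempotent_commutes_on_bimodule:
  assumes J: "ext_is_ideal lm rm mv J" and U: "ext_uniquely_weakly_clean lm rm mv J"
    and ee: "e * e = e"
  shows "lm e v = rm v e"
proof -
  have e_1e: "e * (1 - e) = 0" and e_1e': "(1 - e) * e = 0"
    using ee by (simp_all add: algebra_simps)
  define v1 where "v1 = rm (lm e v) (1 - e)"
  have "lm (1 - e) v1 = 0"
    unfolding v1_def using e_1e' by (simp add: rm_lm lm_mult[symmetric])
  then have "mv v1 v1 = 0"
    unfolding v1_def by (simp add: mv_rm)
  moreover have "lm e v1 = v1" and "rm v1 e = 0"
    unfolding v1_def by (simp_all add: rm_lm lm_mult[symmetric] rm_mult[symmetric] ee e_1e')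
  ultimately have "v1 = 0"
    using ext_Idem_snd_zero_of_square_zero[OF J U, of e v1] ee by (simp add: ext_Idem_iff)
  then have left: "lm e v = rm (lm e v) e"
    unfolding v1_def by (simp add: rm_diff_right)
  define v2 where "v2 = lm (1 - e) (rm v e)"
  have "lm e v2 = 0"
    unfolding v2_def using e_1e by (simp add: lm_mult[symmetric])
  then have "mv v2 v2 = 0"
    unfolding v2_def by (simp add: mv_lm mv_rm)
  moreover have "rm v2 e = v2"
    unfolding v2_def by (simp add: rm_lm rm_mult[symmetric] ee)
  ultimately have "v2 = 0"
    using ext_Idem_snd_zero_of_square_zero[OF J U, of e v2] ee \<open>lm e v2 = 0\<close>
    by (simp add: ext_Idem_iff)
  then have right: "rm v e = lm e (rm v e)"
    unfolding v2_def by (simp add: lm_diff_left)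
  show ?thesis
    using left right rm_lm by metis
qed

lemma ext_Idem_snd_zero_of_central:
  assumes free: "idempotent_free mv" and central: "\<And>v. lm e v = rm v e"
    and eu: "(e, u) \<in> ext_Idem lm rm mv"
  shows "u = 0"
proof -
  have ee: "e * e = e" and u: "lm e u + rm u e + mv u u = u"
    using eu by (simp_all add: ext_Idem_iff)
  define a where "a = lm e u"
  have lm_ee: "lm e (lm e w) = lm e w" for w
    using ee by (simp add: lm_mult[symmetric])
  \<comment> \<open>idempotence reads u = 2a + u u; multiplying by e gives e (u u) = - a, whence a a = - a\<close>
  have "a = lm e (lm e u + rm u e + mv u u)"
    using u a_def by simp
  also have "\<dots> = a + a + lm e (mv u u)"
    by (simp add: lm_add lm_ee central[symmetric] a_def)
  finally have e_uu: "lm e (mv u u) = - a"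
    by (simp add: add.assoc eq_neg_iff_add_eq_0 add.commute)
  have "mv a a = lm e (lm e (mv u u))"
    by (metis a_def mv_lm central rm_mv)
  then have "mv (- a) (- a) = - a"
    by (simp add: lm_ee e_uu lm_minus a_def mv_minus mv_minus_left)
  then have "a = 0"
    using free unfolding idempotent_free_def by fastforce
  then have "mv u u = u"
    using u central[of u] a_def by simp
  then show "u = 0"
    using free unfolding idempotent_free_def by blast
qed

lemma ext_Idem_eq_Idem:
  assumes "idempotent_free mv" and "\<forall>e\<in>Idem. \<forall>v. lm e v = rm v e"
  shows "ext_Idem lm rm mv = (\<lambda>e. (e, 0)) ` Idem"
proof -
  have "(e, u) \<in> ext_Idem lm rm mv \<longleftrightarrow> e \<in> Idem \<and> u = 0" for e u
    using ext_Idem_snd_zero_of_central[OF assms(1)] assms(2)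
    by (auto simp: ext_Idem_iff Idem_def)
  then show ?thesis
    by force
qed

lemma is_ideal_restrict:
  assumes "ext_is_ideal lm rm mv J"
  shows "is_ideal {r. (r, 0) \<in> J}"
  unfolding is_ideal_def
proof (intro conjI ballI allI)
  fix a b r assume a: "a \<in> {r. (r, 0) \<in> J}" and b: "b \<in> {r. (r, 0) \<in> J}"
  show "a - b \<in> {r. (r, 0) \<in> J}"
    using assms a b unfolding ext_is_ideal_def by (force simp: ext_sub_def)
  have "ext_times (r, 0) (a, 0) \<in> J" "ext_times (a, 0) (r, 0) \<in> J"
    using assms a unfolding ext_is_ideal_def by blast+
  then show "r * a \<in> {r. (r, 0) \<in> J}" "a * r \<in> {r. (r, 0) \<in> J}"
    by (simp_all add: ext_mult_def)
qed (use assms in \<open>simp add: ext_is_ideal_def\<close>)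

lemma ext_is_ideal_lift:
  assumes "is_ideal I"
  shows "ext_is_ideal lm rm mv (I \<times> UNIV)"
  using assms unfolding is_ideal_def ext_is_ideal_def
  by (auto simp: ext_sub_def ext_mult_def)

end

lemma uniquely_weakly_clean_restrict:
  fixes J :: "('r::ring_1 \<times> 'v::ab_group_add) set"
  assumes U: "ext_uniquely_weakly_clean lm rm mv J"
    and Idem_eq: "ext_Idem lm rm mv = (\<lambda>e. (e, 0)) ` Idem"
  shows "uniquely_weakly_clean {r. (r, 0) \<in> J}"
  unfolding uniquely_weakly_clean_def
proof
  fix x :: 'r
  obtain h where h: "h \<in> ext_Idem lm rm mv" "ext_sub (x, 0) h \<in> J \<or> ext_add (x, 0) h \<in> J"
    using U unfolding ext_uniquely_weakly_clean_def by blast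
  then obtain e where e: "e \<in> Idem" "h = (e, 0)"
    using Idem_eq by blast
  show "\<exists>!e. e \<in> Idem \<and> (x - e \<in> {r. (r, 0) \<in> J} \<or> x + e \<in> {r. (r, 0) \<in> J})"
  proof (rule ex1I[of _ e])
    fix e' assume e': "e' \<in> Idem \<and> (x - e' \<in> {r. (r, 0) \<in> J} \<or> x + e' \<in> {r. (r, 0) \<in> J})"
    then have "(e', 0) \<in> ext_Idem lm rm mv" "ext_sub (x, 0) (e', 0) \<in> J \<or> ext_add (x, 0) (e', 0) \<in> J"
      using Idem_eq by (auto simp: ext_sub_def ext_add_def)
    then show "e' = e"
      using ext_uniquely_weakly_clean_unique[OF U h] e(2) by blast
  qed (use e h in \<open>auto simp: ext_sub_def ext_add_def\<close>)
qed

lemma ext_uniquely_weakly_clean_lift: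
  fixes I :: "'r::ring_1 set" and lm :: "'r \<Rightarrow> 'v::ab_group_add \<Rightarrow> 'v"
  assumes U: "uniquely_weakly_clean I"
    and Idem_eq: "ext_Idem lm rm mv = (\<lambda>e. (e, 0)) ` Idem"
  shows "ext_uniquely_weakly_clean lm rm mv (I \<times> UNIV)"
  unfolding ext_uniquely_weakly_clean_def
proof
  fix x :: "'r \<times> 'v"
  obtain e where e: "e \<in> Idem" "fst x - e \<in> I \<or> fst x + e \<in> I"
    using U unfolding uniquely_weakly_clean_def by blast
  show "\<exists>!h. h \<in> ext_Idem lm rm mv \<and> (ext_sub x h \<in> I \<times> UNIV \<or> ext_add x h \<in> I \<times> UNIV)"
  proof (rule ex1I[of _ "(e, 0)"])
    fix h assume h: "h \<in> ext_Idem lm rm mv \<and> (ext_sub x h \<in> I \<times> UNIV \<or> ext_add x h \<in> I \<times> UNIV)"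
    then obtain e' where e': "e' \<in> Idem" "h = (e', 0)"
      using Idem_eq by blast
    then have "fst x - e' \<in> I \<or> fst x + e' \<in> I"
      using h by (auto simp: ext_sub_def ext_add_def)
    then show "h = (e, 0)"
      using uniquely_weakly_clean_unique[OF U e'(1) _ e] e'(2) by blast
  qed (use e Idem_eq in \<open>auto simp: ext_sub_def ext_add_def\<close>)
qed

theorem mainTheorem14:
  fixes lm :: "'r::ring_1 \<Rightarrow> 'v::ab_group_add \<Rightarrow> 'v"
    and rm :: "'v \<Rightarrow> 'r \<Rightarrow> 'v"
    and mv :: "'v \<Rightarrow> 'v \<Rightarrow> 'v"
  assumes "bimodule_ring lm rm mv"
    and "idempotent_free mv"
  shows "(\<exists>J. ext_is_ideal lm rm mv J \<and> ext_uniquely_weakly_clean lm rm mv J) \<longleftrightarrow>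
         ((\<exists>I::'r set. is_ideal I \<and> uniquely_weakly_clean I) \<and>
          (\<forall>e\<in>(Idem::'r set). \<forall>v. lm e v = rm v e))"
proof -
  interpret ideal_extension lm rm mv
    by (rule ideal_extension.intro) (rule assms(1))
  have Idem_eq: "ext_Idem lm rm mv = (\<lambda>e. (e, 0)) ` Idem"
    if "\<forall>e\<in>Idem. \<forall>v. lm e v = rm v e"
    using ext_Idem_eq_Idem[OF assms(2) that] .
  show ?thesis
  proof
    assume "\<exists>J. ext_is_ideal lm rm mv J \<and> ext_uniquely_weakly_clean lm rm mv J"
    then obtain J where J: "ext_is_ideal lm rm mv J" and U: "ext_uniquely_weakly_clean lm rm mv J"
      by blast
    have central: "\<forall>e\<in>Idem. \<forall>v. lm e v = rm v e"
      using idempotent_commutes_on_bimodule[OF J U] by (simp add: Idem_def)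
    then show "(\<exists>I::'r set. is_ideal I \<and> uniquely_weakly_clean I) \<and> (\<forall>e\<in>Idem. \<forall>v. lm e v = rm v e)"
      using is_ideal_restrict[OF J] uniquely_weakly_clean_restrict[OF U Idem_eq[OF central]] by blast
  next
    assume "(\<exists>I::'r set. is_ideal I \<and> uniquely_weakly_clean I) \<and> (\<forall>e\<in>Idem. \<forall>v. lm e v = rm v e)"
    then obtain I :: "'r set" where I: "is_ideal I" and U: "uniquely_weakly_clean I"
      and central: "\<forall>e\<in>Idem. \<forall>v. lm e v = rm v e"
      by blast
    show "\<exists>J. ext_is_ideal lm rm mv J \<and> ext_uniquely_weakly_clean lm rm mv J"
      using ext_is_ideal_lift[OF I] ext_uniquely_weakly_clean_lift[OF U Idem_eq[OF central]] by blast
  qed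
qed

end
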